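(* Let $X$ be a finite poset and $F$ a field with $\mathrm{char}(F)=2$ and $|F|>2$. Then every bijective $F$-linear map $\varphi:I(X,F)\to I(X,F)$ satisfying $\varphi(E(I(X,F)))\subseteq E(I(X,F))$ is a Lie automorphism of $I(X,F)$, i.e. $\varphi(ab+ba)=\varphi(a)\varphi(b)+\varphi(b)\varphi(a)$ for all $a,b\in I(X,F)$.
   Context: For a locally finite poset $X$ and a field $F$, $I(X,F)$ is the incidence algebra: functions $f:X\times X\to F$ with $f(x,y)=0$ unless $x\le y$, with convolution product $(fg)(x,y)=\sum_{x\le z\le y}f(x,z)g(z,y)$. $E(A)$ denotes the set of idempotents of a ring $A$. In characteristic $2$, a Lie automorphism of an algebra $A$ means a bijective linear map $A\to A$ preserving the product $a\circ b=ab+ba$ (which coincides with $ab-ba$). *)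

theory Defs
  imports Main
begin

definition is_partial_order :: "('x \<Rightarrow> 'x \<Rightarrow> bool) \<Rightarrow> bool" where
  "is_partial_order le \<longleftrightarrow>
     (\<forall>x. le x x) \<and> (\<forall>x y. le x y \<and> le y x \<longrightarrow> x = y) \<and>
     (\<forall>x y z. le x y \<and> le y z \<longrightarrow> le x z)"

definition incidence_algebra :: "('x \<Rightarrow> 'x \<Rightarrow> bool) \<Rightarrow> ('x \<Rightarrow> 'x \<Rightarrow> 'f::field) set" where
  "incidence_algebra le = {f. \<forall>x y. \<not> le x y \<longrightarrow> f x y = 0}"

definition inc_mult :: "('x::finite \<Rightarrow> 'x \<Rightarrow> bool) \<Rightarrow> ('x \<Rightarrow> 'x \<Rightarrow> 'f::field)
    \<Rightarrow> ('x \<Rightarrow> 'x \<Rightarrow> 'f) \<Rightarrow> ('x \<Rightarrow> 'x \<Rightarrow> 'f)" where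
  "inc_mult le f g = (\<lambda>x y. \<Sum>z\<in>{z. le x z \<and> le z y}. f x z * g z y)"

definition inc_idempotents :: "('x::finite \<Rightarrow> 'x \<Rightarrow> bool) \<Rightarrow> ('x \<Rightarrow> 'x \<Rightarrow> 'f::field) set" where
  "inc_idempotents le = {e \<in> incidence_algebra le. inc_mult le e e = e}"

definition inc_linear :: "('x \<Rightarrow> 'x \<Rightarrow> bool) \<Rightarrow> (('x \<Rightarrow> 'x \<Rightarrow> 'f::field) \<Rightarrow> ('x \<Rightarrow> 'x \<Rightarrow> 'f)) \<Rightarrow> bool" where
  "inc_linear le \<phi> \<longleftrightarrow>
     (\<forall>a\<in>incidence_algebra le. \<forall>b\<in>incidence_algebra le. \<phi> (\<lambda>x y. a x y + b x y) = (\<lambda>x y. \<phi> a x y + \<phi> b x y)) \<and>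
     (\<forall>c. \<forall>a\<in>incidence_algebra le. \<phi> (\<lambda>x y. c * a x y) = (\<lambda>x y. c * \<phi> a x y))"

end

theory Submission
  imports Defs "HOL-Library.Function_Algebras"
begin

text \<open>For a linear map \<open>\<phi>\<close> consider the square defect \<open>D a = \<phi>(a)\<^sup>2 - \<phi>(a\<^sup>2)\<close>. It is
quadratic, its polarisation is the Jordan defect \<open>P a b = \<phi>(a)\<circ>\<phi>(b) - \<phi>(a\<circ>b)\<close> with
\<open>a\<circ>b = ab + ba\<close>, and it vanishes on idempotents when \<open>\<phi>\<close> preserves them. Since \<open>P\<close> is
bilinear it suffices to show \<open>P e\<^sub>x\<^sub>y e\<^sub>u\<^sub>v = 0\<close> for the matrix units. As \<open>e\<^sub>x\<^sub>x + t e\<^sub>x\<^sub>y\<close> is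
idempotent for every \<open>t\<close>, the identity \<open>t\<^sup>2 D e\<^sub>x\<^sub>y + t P e\<^sub>x\<^sub>x e\<^sub>x\<^sub>y = 0\<close> at \<open>t = 1\<close> and at a
scalar \<open>t \<notin> {0, 1}\<close> kills both terms. Every remaining pair of matrix units sits inside a sum of
three or four matrix units that is idempotent; expanding \<open>D\<close> of that sum leaves only the
wanted \<open>P\<close>, all other terms being known to vanish. Neither the characteristic nor
bijectivity enters; in characteristic 2 the Jordan product \<open>ab + ba\<close> is the Lie bracket.\<close>

definition inc_unit :: "'x \<Rightarrow> 'x \<Rightarrow> ('x \<Rightarrow> 'x \<Rightarrow> 'f::field)" where
  "inc_unit x y = (\<lambda>i j. if i = x \<and> j = y then 1 else 0)"

definition inc_smult :: "'f::field \<Rightarrow> ('x \<Rightarrow> 'x \<Rightarrow> 'f) \<Rightarrow> ('x \<Rightarrow> 'x \<Rightarrow> 'f)" where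
  "inc_smult c a = (\<lambda>x y. c * a x y)"

definition jordan_prod :: "('x::finite \<Rightarrow> 'x \<Rightarrow> bool) \<Rightarrow> ('x \<Rightarrow> 'x \<Rightarrow> 'f::field)
    \<Rightarrow> ('x \<Rightarrow> 'x \<Rightarrow> 'f) \<Rightarrow> ('x \<Rightarrow> 'x \<Rightarrow> 'f)" where
  "jordan_prod le a b = inc_mult le a b + inc_mult le b a"

lemma inc_smult_apply [simp]: "inc_smult c a x y = c * a x y"
  by (simp add: inc_smult_def)

lemma inc_smult_zero [simp]: "inc_smult c 0 = 0"
  and inc_smult_zero_left [simp]: "inc_smult 0 a = 0"
  by (simp_all add: fun_eq_iff)

lemma inc_smult_add: "inc_smult c (a + b) = inc_smult c a + inc_smult c b"
  and inc_smult_diff: "inc_smult c (a - b) = inc_smult c a - inc_smult c b"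
  and inc_smult_smult: "inc_smult c (inc_smult d a) = inc_smult (c * d) a"
  by (simp_all add: fun_eq_iff algebra_simps)

lemma inc_mult_add_left: "inc_mult le (a + b) c = inc_mult le a c + inc_mult le b c"
  and inc_mult_add_right: "inc_mult le a (b + c) = inc_mult le a b + inc_mult le a c"
  and inc_mult_smult_left: "inc_mult le (inc_smult t a) b = inc_smult t (inc_mult le a b)"
  and inc_mult_smult_right: "inc_mult le a (inc_smult t b) = inc_smult t (inc_mult le a b)"
  by (simp_all add: inc_mult_def fun_eq_iff algebra_simps sum.distrib sum_distrib_left)

lemma inc_mult_zero_left [simp]: "inc_mult le 0 a = 0"
  and inc_mult_zero_right [simp]: "inc_mult le a 0 = 0"
  by (simp_all add: inc_mult_def fun_eq_iff)

lemma jordan_prod_commute: "jordan_prod le a b = jordan_prod le b a"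
  by (simp add: jordan_prod_def add.commute)

lemma jordan_prod_add_left: "jordan_prod le (a + b) c = jordan_prod le a c + jordan_prod le b c"
  and jordan_prod_smult_left: "jordan_prod le (inc_smult t a) b = inc_smult t (jordan_prod le a b)"
  by (simp_all add: jordan_prod_def inc_mult_add_left inc_mult_add_right inc_mult_smult_left
      inc_mult_smult_right inc_smult_add add_ac)

lemma jordan_prod_zero_left [simp]: "jordan_prod le 0 a = 0"
  by (simp add: jordan_prod_def)

lemma inc_mult_square_add:
  "inc_mult le (a + b) (a + b) = inc_mult le a a + inc_mult le b b + jordan_prod le a b"
  by (simp add: jordan_prod_def inc_mult_add_left inc_mult_add_right add_ac)

lemma partial_order_refl: "is_partial_order le \<Longrightarrow> le x x"
  and partial_order_antisym: "is_partial_order le \<Longrightarrow> le x y \<Longrightarrow> le y x \<Longrightarrow> x = y"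
  and partial_order_trans: "is_partial_order le \<Longrightarrow> le x y \<Longrightarrow> le y z \<Longrightarrow> le x z"
  unfolding is_partial_order_def by blast+

lemma incidence_algebra_zero [simp]: "0 \<in> incidence_algebra le"
  and incidence_algebra_add [simp]:
    "a \<in> incidence_algebra le \<Longrightarrow> b \<in> incidence_algebra le \<Longrightarrow> a + b \<in> incidence_algebra le"
  and incidence_algebra_smult [simp]:
    "a \<in> incidence_algebra le \<Longrightarrow> inc_smult t a \<in> incidence_algebra le"
  and inc_unit_in_incidence_algebra [simp]: "le x y \<Longrightarrow> inc_unit x y \<in> incidence_algebra le"
  by (auto simp: incidence_algebra_def inc_unit_def)

lemma inc_mult_in_incidence_algebra [simp]:
  assumes "is_partial_order le"
  shows "inc_mult le a b \<in> incidence_algebra le"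
  unfolding incidence_algebra_def
proof (intro CollectI allI impI)
  fix x y
  assume "\<not> le x y"
  then have "{z. le x z \<and> le z y} = {}"
    using partial_order_trans[OF assms] by blast
  then show "inc_mult le a b x y = 0"
    unfolding inc_mult_def by (simp only: sum.empty)
qed

lemma jordan_prod_in_incidence_algebra [simp]:
  "is_partial_order le \<Longrightarrow> jordan_prod le a b \<in> incidence_algebra le"
  by (simp add: jordan_prod_def)

lemma inc_unit_mult:
  assumes "le x y" "le u v"
  shows "inc_mult le (inc_unit x y) (inc_unit u v) = (if y = u then inc_unit x v else 0)"
proof (intro ext)
  fix i j
  have "inc_mult le (inc_unit x y) (inc_unit u v) i j
      = (\<Sum>z\<in>{z. le i z \<and> le z j}. if z = y then (if i = x \<and> y = u \<and> j = v then 1 else 0) else 0)"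
    unfolding inc_mult_def inc_unit_def by (rule sum.cong) auto
  also have "\<dots> = (if y = u then inc_unit x v else 0) i j"
    using assms by (auto simp: inc_unit_def)
  finally show "inc_mult le (inc_unit x y) (inc_unit u v) i j = (if y = u then inc_unit x v else 0) i j" .
qed

lemma incidence_algebra_induct:
  fixes a :: "'x::finite \<Rightarrow> 'x \<Rightarrow> 'f::field"
  assumes a: "a \<in> incidence_algebra le"
    and zero: "Q 0"
    and add: "\<And>b c. b \<in> incidence_algebra le \<Longrightarrow> c \<in> incidence_algebra le \<Longrightarrow> Q b \<Longrightarrow> Q c \<Longrightarrow> Q (b + c)"
    and unit: "\<And>t x y. le x y \<Longrightarrow> Q (inc_smult t (inc_unit x y))"
  shows "Q a"
proof -
  define part where "part S = (\<lambda>i j. if (i, j) \<in> S then a i j else 0)" for S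
  have "part S \<in> incidence_algebra le \<and> Q (part S)" for S
    using finite[of S]
  proof induct
    case empty
    have "part {} = 0" by (simp add: part_def fun_eq_iff)
    with zero show ?case by (simp only: incidence_algebra_zero simp_thms)
  next
    case (insert p S)
    obtain x y where p: "p = (x, y)" by fastforce
    have split: "part (insert p S) = part S + inc_smult (a x y) (inc_unit x y)"
      using insert(2) by (auto simp: part_def inc_unit_def p fun_eq_iff)
    show ?case
    proof (cases "le x y")
      case True
      then have "inc_smult (a x y) (inc_unit x y) \<in> incidence_algebra le"
        by simp
      with True insert(3) show ?thesis
        unfolding split by (blast intro: add unit incidence_algebra_add)
    next
      case False
      then have "a x y = 0" using a by (simp add: incidence_algebra_def)
      then show ?thesis using insert(3) unfolding split by simp
    qed
  qed
  moreover have "part UNIV = a" by (simp add: part_def)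
  ultimately show ?thesis by metis
qed

lemma quadratic_zero_at_one_and_other:
  fixes p q c :: "'f::field"
  assumes "p + q = 0" "c * c * p + c * q = 0" "c \<noteq> 0" "c \<noteq> 1"
  shows "p = 0 \<and> q = 0"
proof -
  have "c * (c - 1) * p = 0"
    using assms(1,2) by (simp add: algebra_simps eq_neg_iff_add_eq_0[symmetric])
  with assms(1,3,4) show ?thesis by simp
qed

locale idempotent_preserver =
  fixes le :: "'x::finite \<Rightarrow> 'x \<Rightarrow> bool"
    and \<phi> :: "('x \<Rightarrow> 'x \<Rightarrow> 'f::field) \<Rightarrow> ('x \<Rightarrow> 'x \<Rightarrow> 'f)"
  assumes partial_order: "is_partial_order le"
    and linear: "inc_linear le \<phi>"
    and maps_idempotents: "\<phi> ` inc_idempotents le \<subseteq> inc_idempotents le"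
    and scalar_not_0_1: "\<exists>c::'f. c \<noteq> 0 \<and> c \<noteq> 1"
begin

lemma reflexive [simp]: "le x x"
  using partial_order by (rule partial_order_refl)

lemma inc_mult_closed [simp]: "inc_mult le a b \<in> incidence_algebra le"
  and jordan_prod_closed [simp]: "jordan_prod le a b \<in> incidence_algebra le"
  using partial_order by simp_all

lemma phi_add: "a \<in> incidence_algebra le \<Longrightarrow> b \<in> incidence_algebra le \<Longrightarrow> \<phi> (a + b) = \<phi> a + \<phi> b"
  using linear by (simp add: inc_linear_def plus_fun_def)

lemma phi_smult: "a \<in> incidence_algebra le \<Longrightarrow> \<phi> (inc_smult t a) = inc_smult t (\<phi> a)"
  using linear by (simp add: inc_linear_def inc_smult_def)

lemma phi_zero [simp]: "\<phi> 0 = 0"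
  using phi_smult[of 0 0] by simp

lemma phi_idempotent: "e \<in> inc_idempotents le \<Longrightarrow> inc_mult le (\<phi> e) (\<phi> e) = \<phi> e"
  using maps_idempotents by (auto simp: inc_idempotents_def)

definition square_defect :: "('x \<Rightarrow> 'x \<Rightarrow> 'f) \<Rightarrow> ('x \<Rightarrow> 'x \<Rightarrow> 'f)" where
  "square_defect a = inc_mult le (\<phi> a) (\<phi> a) - \<phi> (inc_mult le a a)"

definition jordan_defect :: "('x \<Rightarrow> 'x \<Rightarrow> 'f) \<Rightarrow> ('x \<Rightarrow> 'x \<Rightarrow> 'f) \<Rightarrow> ('x \<Rightarrow> 'x \<Rightarrow> 'f)" where
  "jordan_defect a b = jordan_prod le (\<phi> a) (\<phi> b) - \<phi> (jordan_prod le a b)"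

lemma square_defect_idempotent: "e \<in> inc_idempotents le \<Longrightarrow> square_defect e = 0"
  using phi_idempotent by (simp add: square_defect_def inc_idempotents_def)

lemma square_defect_add:
  assumes "a \<in> incidence_algebra le" "b \<in> incidence_algebra le"
  shows "square_defect (a + b) = square_defect a + square_defect b + jordan_defect a b"
  using assms by (simp add: square_defect_def jordan_defect_def phi_add inc_mult_square_add)

lemma square_defect_smult:
  "a \<in> incidence_algebra le \<Longrightarrow> square_defect (inc_smult t a) = inc_smult (t * t) (square_defect a)"
  by (simp add: square_defect_def phi_smult inc_mult_smult_left inc_mult_smult_right inc_smult_smult
      inc_smult_diff mult.commute)

lemma jordan_defect_commute: "jordan_defect a b = jordan_defect b a"
  by (simp add: jordan_defect_def jordan_prod_commute)

lemma jordan_defect_self: "jordan_defect a a = square_defect a + square_defect a"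
  unfolding jordan_defect_def square_defect_def jordan_prod_def
  by (simp only: phi_add inc_mult_closed diff_add_eq add_diff_eq diff_diff_eq add.assoc)

lemma jordan_defect_add_left:
  "a \<in> incidence_algebra le \<Longrightarrow> b \<in> incidence_algebra le \<Longrightarrow>
    jordan_defect (a + b) c = jordan_defect a c + jordan_defect b c"
  by (simp add: jordan_defect_def phi_add jordan_prod_add_left)

lemma jordan_defect_smult_left:
  "a \<in> incidence_algebra le \<Longrightarrow> jordan_defect (inc_smult t a) b = inc_smult t (jordan_defect a b)"
  by (simp add: jordan_defect_def phi_smult jordan_prod_smult_left inc_smult_diff)

lemma jordan_defect_add_right:
  "b \<in> incidence_algebra le \<Longrightarrow> c \<in> incidence_algebra le \<Longrightarrow>
    jordan_defect a (b + c) = jordan_defect a b + jordan_defect a c"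
  by (simp add: jordan_defect_commute[of a] jordan_defect_add_left)

lemma jordan_defect_smult_right:
  "b \<in> incidence_algebra le \<Longrightarrow> jordan_defect a (inc_smult t b) = inc_smult t (jordan_defect a b)"
  by (simp add: jordan_defect_commute[of a] jordan_defect_smult_left)

lemma jordan_defect_zero_left [simp]: "jordan_defect 0 b = 0"
  by (simp add: jordan_defect_def)

lemma defects_along_idempotent_line:
  assumes "e \<in> incidence_algebra le" "n \<in> incidence_algebra le"
    and line: "\<And>t. e + inc_smult t n \<in> inc_idempotents le"
  shows "square_defect n = 0" "jordan_defect e n = 0"
proof -
  obtain c :: 'f where c: "c \<noteq> 0" "c \<noteq> 1"
    using scalar_not_0_1 by blast
  have "square_defect e = 0"
    using line[of 0] by (simp add: square_defect_idempotent)
  then have "inc_smult (t * t) (square_defect n) + inc_smult t (jordan_defect e n) = 0" for t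
    using square_defect_idempotent[OF line[of t]] assms(1,2)
    by (simp add: square_defect_add square_defect_smult jordan_defect_smult_right)
  from this[of 1] this[of c] c
  have "square_defect n i j = 0 \<and> jordan_defect e n i j = 0" for i j
    by (simp add: fun_eq_iff) (metis quadratic_zero_at_one_and_other[OF _ _ c])
  then show "square_defect n = 0" "jordan_defect e n = 0"
    by (simp_all add: fun_eq_iff)
qed

lemmas unit_mult_simps = inc_mult_add_left inc_mult_add_right inc_mult_smult_left
  inc_mult_smult_right inc_unit_mult

lemma
  assumes "le x y"
  shows square_defect_unit: "square_defect (inc_unit x y) = 0"
    and jordan_defect_source_unit: "jordan_defect (inc_unit x x) (inc_unit x y) = 0"
    and jordan_defect_target_unit: "jordan_defect (inc_unit y y) (inc_unit x y) = 0"
proof -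
  have diagonal: "square_defect (inc_unit z z) = 0" for z
    by (simp add: square_defect_idempotent inc_idempotents_def inc_unit_mult)
  have "square_defect (inc_unit x y) = 0 \<and> jordan_defect (inc_unit x x) (inc_unit x y) = 0 \<and>
      jordan_defect (inc_unit y y) (inc_unit x y) = 0"
  proof (cases "x = y")
    case True
    then show ?thesis by (simp add: diagonal jordan_defect_self)
  next
    case False
    have source_line: "inc_unit x x + inc_smult t (inc_unit x y) \<in> inc_idempotents le"
      and target_line: "inc_unit y y + inc_smult t (inc_unit x y) \<in> inc_idempotents le" for t
      using assms False by (simp_all add: inc_idempotents_def unit_mult_simps add.commute)
    show ?thesis
      using defects_along_idempotent_line[OF _ _ source_line]
        defects_along_idempotent_line[OF _ _ target_line] assms by simp
  qed
  then show "square_defect (inc_unit x y) = 0" "jordan_defect (inc_unit x x) (inc_unit x y) = 0"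
      "jordan_defect (inc_unit y y) (inc_unit x y) = 0"
    by simp_all
qed

lemmas defect_expansion = square_defect_add jordan_defect_add_left square_defect_unit

lemma jordan_defect_diagonal_units:
  assumes "x \<noteq> u"
  shows "jordan_defect (inc_unit x x) (inc_unit u u) = 0"
proof -
  have "inc_unit x x + inc_unit u u \<in> inc_idempotents le"
    using assms by (simp add: inc_idempotents_def unit_mult_simps)
  from square_defect_idempotent[OF this] show ?thesis
    by (simp add: defect_expansion)
qed

lemma jordan_defect_diagonal_unit:
  assumes "le u v"
  shows "jordan_defect (inc_unit x x) (inc_unit u v) = 0"
proof -
  consider "x = u" | "x = v" | "u = v" "x \<noteq> u" | "x \<noteq> u" "x \<noteq> v" "u \<noteq> v"
    by blast
  then show ?thesis
  proof cases
    case 1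
    with assms show ?thesis by (simp add: jordan_defect_source_unit)
  next
    case 2
    with assms show ?thesis by (simp add: jordan_defect_target_unit)
  next
    case 3
    then show ?thesis by (simp add: jordan_defect_diagonal_units)
  next
    case 4
    with assms have "inc_unit u u + inc_unit u v + inc_unit x x \<in> inc_idempotents le"
      by (simp add: inc_idempotents_def unit_mult_simps)
    from square_defect_idempotent[OF this] 4 assms show ?thesis
      by (simp add: defect_expansion jordan_defect_source_unit jordan_defect_diagonal_units
          jordan_defect_commute[of "inc_unit u v"])
  qed
qed

lemma jordan_defect_noncomposable_units:
  assumes "le x y" "le u v" "x \<noteq> y" "u \<noteq> v" "y \<noteq> u" "v \<noteq> x" "(x, y) \<noteq> (u, v)"
  shows "jordan_defect (inc_unit x y) (inc_unit u v) = 0"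
proof -
  consider "x = u" | "y = v" | "x \<noteq> u" "y \<noteq> v"
    by blast
  then show ?thesis
  proof cases
    case 1
    with assms have "inc_unit x x + inc_unit x y + inc_unit x v \<in> inc_idempotents le"
      by (simp add: inc_idempotents_def unit_mult_simps)
    from square_defect_idempotent[OF this] 1 assms show ?thesis
      by (simp add: defect_expansion jordan_defect_source_unit)
  next
    case 2
    with assms have "inc_unit y y + inc_unit x y + inc_unit u y \<in> inc_idempotents le"
      by (simp add: inc_idempotents_def unit_mult_simps add_ac)
    from square_defect_idempotent[OF this] 2 assms show ?thesis
      by (simp add: defect_expansion jordan_defect_target_unit)
  next
    case 3
    with assms have "inc_unit x x + inc_unit u u + inc_unit x y + inc_unit u v \<in> inc_idempotents le"
      by (simp add: inc_idempotents_def unit_mult_simps add_ac)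
    from square_defect_idempotent[OF this] 3 assms show ?thesis
      by (simp add: defect_expansion jordan_defect_source_unit jordan_defect_diagonal_units
          jordan_defect_diagonal_unit)
  qed
qed

lemma jordan_defect_composable_units:
  assumes "le x y" "le y v" "x \<noteq> y" "y \<noteq> v"
  shows "jordan_defect (inc_unit x y) (inc_unit y v) = 0"
proof -
  have "le x v" "x \<noteq> v"
    using assms partial_order_trans[OF partial_order] partial_order_antisym[OF partial_order]
    by blast+
  with assms have "inc_unit y y + inc_unit x y + inc_unit y v + inc_unit x v \<in> inc_idempotents le"
    by (simp add: inc_idempotents_def unit_mult_simps add_ac)
  from square_defect_idempotent[OF this] assms \<open>le x v\<close> \<open>x \<noteq> v\<close> show ?thesis
    by (simp add: defect_expansion jordan_defect_source_unit jordan_defect_target_unit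
        jordan_defect_diagonal_unit jordan_defect_noncomposable_units)
qed

lemma jordan_defect_units:
  assumes "le x y" "le u v"
  shows "jordan_defect (inc_unit x y) (inc_unit u v) = 0"
proof -
  consider "x = y" | "u = v" | "(x, y) = (u, v)" | "y = u" "x \<noteq> y" "u \<noteq> v"
    | "v = x" "x \<noteq> y" "u \<noteq> v" | "x \<noteq> y" "u \<noteq> v" "y \<noteq> u" "v \<noteq> x" "(x, y) \<noteq> (u, v)"
    by blast
  then show ?thesis
  proof cases
    case 1
    with assms show ?thesis by (simp add: jordan_defect_diagonal_unit)
  next
    case 2
    with assms show ?thesis by (simp add: jordan_defect_commute jordan_defect_diagonal_unit)
  next
    case 3
    with assms show ?thesis by (simp add: jordan_defect_self square_defect_unit)
  next
    case 4
    with assms show ?thesis by (simp add: jordan_defect_composable_units)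
  next
    case 5
    with assms show ?thesis by (simp add: jordan_defect_commute jordan_defect_composable_units)
  next
    case 6
    with assms show ?thesis by (simp add: jordan_defect_noncomposable_units)
  qed
qed

lemma jordan_defect_unit_left:
  assumes "le x y" "b \<in> incidence_algebra le"
  shows "jordan_defect (inc_unit x y) b = 0"
  using assms(2)
proof (rule incidence_algebra_induct[where Q = "\<lambda>b. jordan_defect (inc_unit x y) b = 0"])
  show "jordan_defect (inc_unit x y) 0 = 0"
    by (simp only: jordan_defect_commute[of _ 0] jordan_defect_zero_left)
qed (simp_all add: assms(1) jordan_defect_add_right jordan_defect_smult_right jordan_defect_units)

lemma jordan_defect_eq_0:
  assumes "a \<in> incidence_algebra le" "b \<in> incidence_algebra le"
  shows "jordan_defect a b = 0"
  using assms(1)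
  by (rule incidence_algebra_induct[where Q = "\<lambda>a. jordan_defect a b = 0"])
    (simp_all add: assms(2) jordan_defect_add_left jordan_defect_smult_left jordan_defect_unit_left)

theorem jordan_prod_preserved:
  assumes "a \<in> incidence_algebra le" "b \<in> incidence_algebra le"
  shows "\<phi> (jordan_prod le a b) = jordan_prod le (\<phi> a) (\<phi> b)"
  using jordan_defect_eq_0[OF assms] by (simp add: jordan_defect_def)

end

theorem corollary3p2:
  fixes le :: "'x::finite \<Rightarrow> 'x \<Rightarrow> bool"
    and \<phi> :: "('x \<Rightarrow> 'x \<Rightarrow> 'f::field) \<Rightarrow> ('x \<Rightarrow> 'x \<Rightarrow> 'f)"
  assumes "is_partial_order le"
    and "(1::'f) + 1 = 0"
    and "\<exists>c::'f. c \<noteq> 0 \<and> c \<noteq> 1"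
    and "inc_linear le \<phi>"
    and "bij_betw \<phi> (incidence_algebra le) (incidence_algebra le)"
    and "\<phi> ` inc_idempotents le \<subseteq> inc_idempotents le"
  shows "\<forall>a\<in>incidence_algebra le. \<forall>b\<in>incidence_algebra le.
           \<phi> (\<lambda>x y. inc_mult le a b x y + inc_mult le b a x y) =
           (\<lambda>x y. inc_mult le (\<phi> a) (\<phi> b) x y + inc_mult le (\<phi> b) (\<phi> a) x y)"
proof -
  interpret idempotent_preserver le \<phi>
    using assms(1,3,4,6) by unfold_locales
  have jordan_prod_eta: "(\<lambda>x y. inc_mult le a b x y + inc_mult le b a x y) = jordan_prod le a b"
    for a b
    by (simp add: jordan_prod_def fun_eq_iff)
  show ?thesis
    unfolding jordan_prod_eta by (blast intro: jordan_prod_preserved)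
qed

end
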